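(* Let $m\in\{1,2\}$, $\gamma\in[2,3]$ and $z\in(0,z_M]$. Then the solution of $\frac{dC}{dV}=\frac{F(V,C;\gamma,z)}{G(V,C;\gamma,z)}$ on $[V_1,-\sqrt{2/\gamma}\,C_8(z))$ with $C(V_1)=C_1$ satisfies $C(V)>-\sqrt{\gamma/2}\,V$ for all $V\in(V_1,-\sqrt{2/\gamma}\,C_8(z))$ (and $C_1\ge-\sqrt{\gamma/2}V_1$ with equality only at $\gamma=2$).
   Context: Fix $m\in\{1,2\}$. For $z>0$ put $\lambda=1+m\gamma z$, $a_1=1+\frac{m(\gamma-1)}{2}$, $a_2=\frac{m(\gamma-1)+mz\gamma(\gamma-3)}{2}$, $a_3=\frac{mz\gamma(\gamma-1)}{2}$, $G(V,C;\gamma,z)=C^2[(m+1)V+2mz]-V(1+V)(\lambda+V)$, $F(V,C;\gamma,z)=C\{C^2[1+\frac{mz}{1+V}]-a_1(1+V)^2+a_2(1+V)-a_3\}$. $V_1=-\frac2{\gamma+1}$, $C_1=\frac{\sqrt{2\gamma(\gamma-1)}}{\gamma+1}$. $z_M=(\sqrt\gamma+\sqrt2)^{-2}$, $w(z)=\sqrt{1-2(\gamma+2)z+(\gamma-2)^2z^2}$, $V_8=\frac{-1+(\gamma-2)z+w}{2}$, $C_8=1+V_8$. *)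

theory Defs
  imports "HOL-Analysis.Analysis"
begin

(* m is the geometry parameter (m = 1 or 2), taken as a real number in formulas *)

definition lam :: "real \<Rightarrow> real \<Rightarrow> real \<Rightarrow> real" where
  "lam m \<gamma> z = 1 + m * \<gamma> * z"

definition a1 :: "real \<Rightarrow> real \<Rightarrow> real" where
  "a1 m \<gamma> = 1 + m * (\<gamma> - 1) / 2"

definition a2 :: "real \<Rightarrow> real \<Rightarrow> real \<Rightarrow> real" where
  "a2 m \<gamma> z = (m * (\<gamma> - 1) + m * z * \<gamma> * (\<gamma> - 3)) / 2"

definition a3 :: "real \<Rightarrow> real \<Rightarrow> real \<Rightarrow> real" where
  "a3 m \<gamma> z = m * z * \<gamma> * (\<gamma> - 1) / 2"

definition Gf :: "real \<Rightarrow> real \<Rightarrow> real \<Rightarrow> real \<Rightarrow> real \<Rightarrow> real" where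
  "Gf m V C \<gamma> z = C^2 * ((m + 1) * V + 2 * m * z) - V * (1 + V) * (lam m \<gamma> z + V)"

definition Ff :: "real \<Rightarrow> real \<Rightarrow> real \<Rightarrow> real \<Rightarrow> real \<Rightarrow> real" where
  "Ff m V C \<gamma> z = C * (C^2 * (1 + m * z / (1 + V)) - a1 m \<gamma> * (1 + V)^2
                        + a2 m \<gamma> z * (1 + V) - a3 m \<gamma> z)"

definition V1 :: "real \<Rightarrow> real" where
  "V1 \<gamma> = - 2 / (\<gamma> + 1)"

definition C1 :: "real \<Rightarrow> real" where
  "C1 \<gamma> = sqrt (2 * \<gamma> * (\<gamma> - 1)) / (\<gamma> + 1)"

definition zM :: "real \<Rightarrow> real" where
  "zM \<gamma> = 1 / (sqrt \<gamma> + sqrt 2)^2"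

definition wf :: "real \<Rightarrow> real \<Rightarrow> real" where
  "wf \<gamma> z = sqrt (1 - 2 * (\<gamma> + 2) * z + (\<gamma> - 2)^2 * z^2)"

definition V8 :: "real \<Rightarrow> real \<Rightarrow> real" where
  "V8 \<gamma> z = (-1 + (\<gamma> - 2) * z + wf \<gamma> z) / 2"

definition C8 :: "real \<Rightarrow> real \<Rightarrow> real" where
  "C8 \<gamma> z = 1 + V8 \<gamma> z"

definition is_sol :: "real \<Rightarrow> real \<Rightarrow> real \<Rightarrow> (real \<Rightarrow> real) \<Rightarrow> real \<Rightarrow> real \<Rightarrow> real \<Rightarrow> bool" where
  "is_sol m \<gamma> z C a b c0 \<longleftrightarrow> C a = c0 \<and>
     (\<forall>V \<in> {a..<b}. Gf m V (C V) \<gamma> z \<noteq> 0 \<and>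
        (C has_real_derivative (Ff m V (C V) \<gamma> z / Gf m V (C V) \<gamma> z)) (at V within {a..<b}))"

end

theory Submission
  imports Defs
begin

text \<open>Put \<open>k = sqrt (\<gamma>/2)\<close> and \<open>c = C8 \<gamma> z\<close>; the claim is that the solution stays above the line
  \<open>C = -k V\<close> up to \<open>V = -c/k\<close>. On that line \<open>G = V q(V)\<close> and \<open>F + k G = k m V\<^sup>2 R(V) / (2(1+V))\<close>
  for the quadratics \<open>q = G_line_factor\<close> and \<open>R = F_line_factor\<close>. For \<open>V1 \<le> V < -c/k\<close> one has
  \<open>q(V) > 0\<close>, and \<open>R(V) < 0\<close> because \<open>R\<close> is convex, negative at \<open>V1\<close> and non-positive at \<open>-c/k\<close>.
  The two signs at \<open>-c/k\<close> come from \<open>k/(k+1) \<le> c < 1\<close> and the quadratic equation satisfied by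
  \<open>c\<close>, which eliminates \<open>z\<close>. Hence \<open>dC/dV > -k\<close> wherever the solution meets the line, so
  \<open>C + k V\<close>, which is \<open>\<ge> 0\<close> at \<open>V1\<close>, can never return to zero.\<close>

lemma le_larger_root_if_quadratic_nonpos:
  fixes s P w x :: real
  assumes "0 \<le> w" "w^2 = s^2 - 4*P" "x^2 - s*x + P \<le> 0"
  shows "x \<le> (s + w) / 2"
proof -
  have "(2*x - s)^2 \<le> w^2"
    using assms(2,3) by (simp add: power2_eq_square algebra_simps)
  then have "2*x - s \<le> w"
    using assms(1) by (rule power2_le_imp_le)
  then show ?thesis
    by simp
qed

lemma larger_root_less_if_quadratic_pos:
  fixes s P w x :: real
  assumes "0 \<le> w" "w^2 = s^2 - 4*P" "0 < x^2 - s*x + P" "s \<le> 2*x"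
  shows "(s + w) / 2 < x"
proof -
  have "w^2 < (2*x - s)^2"
    using assms(2,3) by (simp add: power2_eq_square algebra_simps)
  then show ?thesis
    using power_less_imp_less_base[of w 2 "2*x - s"] assms(4) by simp
qed

lemma zM_eq:
  fixes k :: real
  assumes "0 \<le> k" "\<gamma> = 2*k^2"
  shows "zM \<gamma> = 1 / (2*(k+1)^2)"
proof -
  have "sqrt \<gamma> = sqrt 2 * k"
    using assms by (simp add: real_sqrt_mult)
  then have "(sqrt \<gamma> + sqrt 2)^2 = 2*(k+1)^2"
    by (simp add: power2_eq_square algebra_simps)
  then show ?thesis
    unfolding zM_def by simp
qed

lemma z_bounds_of_le_zM:
  fixes k z :: real
  assumes "1 \<le> k" "\<gamma> = 2*k^2" "0 < z" "z \<le> zM \<gamma>"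
  shows "2*(k+1)^2*z \<le> 1" "z \<le> 1/8"
proof -
  show "2*(k+1)^2*z \<le> 1"
    using assms(4) zM_eq[OF _ assms(2)] assms(1) by (simp add: field_simps)
  moreover have "2^2 \<le> (k+1)^2"
    using assms(1) by (intro power_mono) auto
  then have "8*z \<le> 2*(k+1)^2*z"
    using assms(3) by simp
  ultimately show "z \<le> 1/8"
    by linarith
qed

lemma wf_nonneg_square:
  assumes "2*(k+1)^2*z \<le> 1" "0 \<le> k" "0 \<le> z" "\<gamma> = 2*k^2"
  shows "0 \<le> wf \<gamma> z" "(wf \<gamma> z)^2 = (1 + (\<gamma>-2)*z)^2 - 4*(\<gamma>*z)"
proof -
  have "(k-1)^2 \<le> (k+1)^2"
    using assms(2) by (simp add: power2_eq_square algebra_simps)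
  then have "2*(k-1)^2*z \<le> 2*(k+1)^2*z"
    using assms(3) by (simp add: mult_right_mono)
  then have "0 \<le> (1 - 2*(k+1)^2*z)*(1 - 2*(k-1)^2*z)"
    using assms(1) by simp
  also have "\<dots> = 1 - 2*(\<gamma>+2)*z + (\<gamma>-2)^2*z^2"
    unfolding assms(4) by algebra
  finally show "0 \<le> wf \<gamma> z" "(wf \<gamma> z)^2 = (1 + (\<gamma>-2)*z)^2 - 4*(\<gamma>*z)"
    unfolding wf_def by (simp_all add: power2_eq_square algebra_simps)
qed

lemma C8_bounds:
  fixes k z :: real
  assumes k: "1 \<le> k" and z: "0 < z" "2*(k+1)^2*z \<le> 1" and \<gamma>: "\<gamma> = 2*k^2"
  shows "k/(k+1) \<le> C8 \<gamma> z" "C8 \<gamma> z < 1"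
    "2*z*(k^2 - (k^2-1)*C8 \<gamma> z) = C8 \<gamma> z*(1 - C8 \<gamma> z)"
proof -
  define s where "s = 1 + (\<gamma>-2)*z"
  have C8: "C8 \<gamma> z = (s + wf \<gamma> z)/2"
    unfolding C8_def V8_def s_def by (simp add: field_simps)
  have w: "0 \<le> wf \<gamma> z" "(wf \<gamma> z)^2 = s^2 - 4*(\<gamma>*z)"
    using wf_nonneg_square[OF z(2) _ _ \<gamma>] k z unfolding s_def by auto
  have "(2 * C8 \<gamma> z - s)^2 = s^2 - 4*(\<gamma>*z)"
    using w(2) unfolding C8 by (simp add: field_simps)
  then show "2*z*(k^2 - (k^2-1)*C8 \<gamma> z) = C8 \<gamma> z*(1 - C8 \<gamma> z)"
    unfolding s_def \<gamma> by (simp add: power2_eq_square algebra_simps)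
  have "(k/(k+1))^2 - s*(k/(k+1)) + \<gamma>*z = k*(2*(k+1)^2*z - 1)/(k+1)^2"
    using k unfolding s_def \<gamma> by (simp add: divide_simps) algebra
  also have "\<dots> \<le> 0"
    using k z by (simp add: divide_nonpos_pos mult_nonneg_nonpos)
  finally show "k/(k+1) \<le> C8 \<gamma> z"
    unfolding C8 by (rule le_larger_root_if_quadratic_nonpos[OF w])
  have "(\<gamma>-2)*z \<le> 1"
  proof -
    have "(\<gamma>-2)*z \<le> 2*(k+1)^2*z"
      using k z unfolding \<gamma> by (intro mult_right_mono) (auto simp: power2_eq_square algebra_simps)
    then show ?thesis
      using z by linarith
  qed
  then show "C8 \<gamma> z < 1"
    unfolding C8 using z by (intro larger_root_less_if_quadratic_pos[OF w]) (auto simp: s_def algebra_simps)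
qed

definition G_line_factor :: "real \<Rightarrow> real \<Rightarrow> real \<Rightarrow> real \<Rightarrow> real" where
  "G_line_factor m \<gamma> z V = ((m+1)*\<gamma>/2 - 1)*V^2 - 2*V - (1 + m*\<gamma>*z)"

definition F_line_factor :: "real \<Rightarrow> real \<Rightarrow> real \<Rightarrow> real" where
  "F_line_factor \<gamma> z V = (2*\<gamma>-1)*V^2 + (3*\<gamma>-2-z*\<gamma>*(\<gamma>-2))*V + (\<gamma>-1) + z*\<gamma>*(3-\<gamma>)"

lemma G_on_line:
  assumes "\<gamma> = 2*k^2"
  shows "Gf m V (-k*V) \<gamma> z = V * G_line_factor m \<gamma> z V"
  using assms unfolding Gf_def G_line_factor_def lam_def by (simp add: power2_eq_square algebra_simps)

lemma F_on_line:
  assumes "\<gamma> = 2*k^2" "1 + V \<noteq> 0"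
  shows "Ff m V (-k*V) \<gamma> z + k * Gf m V (-k*V) \<gamma> z = k*m*V^2 * F_line_factor \<gamma> z V / (2*(1+V))"
  using assms unfolding Gf_def Ff_def lam_def a1_def a2_def a3_def F_line_factor_def
  by (simp add: field_simps power2_eq_square)

lemma convex_quadratic_neg_between:
  fixes A B C a b x :: real
  assumes "0 \<le> A" "A*a^2 + B*a + C < 0" "A*b^2 + B*b + C \<le> 0" "a \<le> x" "x < b"
  shows "A*x^2 + B*x + C < 0"
proof -
  have "(b-a)*(A*x^2 + B*x + C)
      = (b-x)*(A*a^2 + B*a + C) + (x-a)*(A*b^2 + B*b + C) + A*((x-a)*(x-b)*(b-a))"
    by (simp add: algebra_simps power2_eq_square)
  also have "\<dots> < 0"
  proof -
    have "(b-x)*(A*a^2 + B*a + C) < 0"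
      using assms(2,5) by (simp add: mult_pos_neg)
    moreover have "(x-a)*(A*b^2 + B*b + C) \<le> 0"
      using assms(3,4) by (simp add: mult_nonneg_nonpos)
    moreover have "(x-a)*(x-b) \<le> 0"
      using assms(4,5) by (simp add: mult_nonneg_nonpos)
    then have "A*((x-a)*(x-b)*(b-a)) \<le> 0"
      using assms(1,4,5) by (simp add: mult_nonneg_nonpos mult_nonpos_nonneg)
    ultimately show ?thesis
      by linarith
  qed
  finally show ?thesis
    using assms(4,5) by (simp add: mult_less_0_iff)
qed

lemma F_line_factor_V1_neg:
  fixes \<gamma> z :: real
  assumes \<gamma>: "2 \<le> \<gamma>" "\<gamma> \<le> 3" and z: "0 < z" "z \<le> 1/8"
  shows "F_line_factor \<gamma> z (V1 \<gamma>) < 0"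
proof -
  have "F_line_factor \<gamma> z (V1 \<gamma>) * (\<gamma>+1)^2 = (\<gamma>^2-4*\<gamma>+1)*((\<gamma>-1) - z*\<gamma>*(\<gamma>+1))"
    using \<gamma> unfolding F_line_factor_def V1_def by (simp add: divide_simps) algebra
  moreover have "\<gamma>^2-4*\<gamma>+1 < 0"
  proof -
    have "(\<gamma>-2)^2 \<le> 1^2"
      using \<gamma> by (intro power_mono) auto
    then show ?thesis
      by (simp add: power2_eq_square algebra_simps)
  qed
  moreover have "z*\<gamma>*(\<gamma>+1) < \<gamma> - 1"
  proof -
    have "z*(\<gamma>*(\<gamma>+1)) \<le> (1/8)*(\<gamma>*(\<gamma>+1))"
      using z \<gamma> by (intro mult_right_mono) auto
    moreover have "(\<gamma>-2)*(\<gamma>-3) \<le> 0"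
      using \<gamma> by (simp add: mult_nonneg_nonpos)
    ultimately show ?thesis
      using \<gamma> by (simp add: algebra_simps)
  qed
  ultimately have "F_line_factor \<gamma> z (V1 \<gamma>) * (\<gamma>+1)^2 < 0"
    by (simp add: mult_neg_pos)
  then show ?thesis
    using \<gamma> by (simp add: mult_less_0_iff)
qed

lemma endpoint_cofactor_nonpos:
  fixes k c :: real
  assumes k: "1 \<le> k" "k \<le> 5/4" and c: "0 < c" "c < 1"
  shows "(k^3-2*k^5) + (k - k^2 - 5*k^3 + 4*k^4 + 2*k^5)*c + (-1+k+4*k^2-2*k^3-2*k^4)*c^2 \<le> 0"
proof -
  define t where "t = k - 1"
  define A where "A = -1+k+4*k^2-2*k^3-2*k^4"
  define B where "B = k - k^2 - 5*k^3 + 4*k^4 + 2*k^5"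
  have t: "0 \<le> t" "t \<le> 1/4" and kt: "k = 1 + t"
    using k unfolding t_def by auto
  have "A = -5*t-14*t^2-10*t^3-2*t^4"
    unfolding A_def kt by (simp add: algebra_simps power2_eq_square power3_eq_cube power4_eq_xxxx)
  then have "A \<le> 0"
    using t zero_le_power[OF t(1), of 2] zero_le_power[OF t(1), of 3] zero_le_power[OF t(1), of 4]
    by linarith
  have "B + 2*A = 1 + 11*t^3 + 10*t^4 + 2*t^5"
    unfolding A_def B_def kt by algebra
  then have "0 \<le> B + 2*A"
    using t by simp
  have "t^2 \<le> (1/4)^2" "t^3 \<le> (1/4)^3"
    using t by (intro power_mono, simp_all)+
  then have "-2 -3*t + 2*t^2 + 2*t^3 \<le> 0"
    using t by (simp add: power_divide)
  then have "t*(-2 -3*t + 2*t^2 + 2*t^3) \<le> 0"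
    using t by (simp add: mult_nonneg_nonpos)
  moreover have "(k^3-2*k^5) + B + A = t*(-2 -3*t + 2*t^2 + 2*t^3)"
    unfolding A_def B_def kt by algebra
  moreover have "A*2 \<le> A*(c+1)"
    using \<open>A \<le> 0\<close> c by (simp add: mult_left_mono_neg)
  then have "(c-1)*(B + A*(c+1)) \<le> 0"
    using \<open>0 \<le> B + 2*A\<close> c by (intro mult_nonpos_nonneg) auto
  moreover have "(k^3-2*k^5) + B*c + A*c^2 = ((k^3-2*k^5) + B + A) + (c-1)*(B + A*(c+1))"
    by (simp add: algebra_simps power2_eq_square)
  ultimately show ?thesis
    unfolding A_def B_def by linarith
qed

lemma F_line_factor_endpoint_nonpos:
  fixes k c z :: real
  assumes k: "1 \<le> k" "k \<le> 5/4" and c: "k/(k+1) \<le> c" "c < 1"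
    and z: "2*z*(k^2 - (k^2-1)*c) = c*(1-c)"
  shows "F_line_factor (2*k^2) z (-c/k) \<le> 0"
proof -
  define D where "D = k^2 - (k^2-1)*c"
  have "0 < k/(k+1)"
    using k by simp
  then have "0 < c"
    using c by linarith
  have "(k^2-1)*c \<le> (k^2-1)*1"
    using c k by (intro mult_left_mono) (auto simp: one_le_power)
  then have "0 < k^2*D"
    using k unfolding D_def by simp
  have "(k+1)*c - k \<ge> 0"
    using c k by (simp add: field_simps)
  have "F_line_factor (2*k^2) z (-c/k) * (k^2*D)
     = D*((4*k^2-1)*c^2 - (6*k^2-2)*c*k + k^2*(2*k^2-1)) + (2*z*D)*(2*k^3*(k^2-1)*c + k^4*(3-2*k^2))"
    using k unfolding F_line_factor_def by (simp add: field_simps power2_eq_square power4_eq_xxxx power3_eq_cube)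
  also have "\<dots> = ((k+1)*c - k) * ((k^3-2*k^5) + (k - k^2 - 5*k^3 + 4*k^4 + 2*k^5)*c + (-1+k+4*k^2-2*k^3-2*k^4)*c^2)"
    \<comment> \<open>\<open>z\<close> occurs only in the combination \<open>2 z D = c (1 - c)\<close>\<close>
    unfolding z[folded D_def] unfolding D_def by algebra
  also have "\<dots> \<le> 0"
    using \<open>(k+1)*c - k \<ge> 0\<close> endpoint_cofactor_nonpos[OF k \<open>0 < c\<close> c(2)] by (simp add: mult_nonneg_nonpos)
  finally show ?thesis
    using \<open>0 < k^2*D\<close> by (meson mult_pos_pos not_le)
qed

lemma G_line_factor_endpoint_nonneg:
  fixes k c z m :: real
  assumes k: "1 \<le> k" and c: "k/(k+1) \<le> c" "c < 1" and m: "0 \<le> m"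
    and z: "2*z*(k^2 - (k^2-1)*c) = c*(1-c)"
  shows "0 \<le> G_line_factor m (2*k^2) z (-c/k)"
proof -
  define D where "D = k^2 - (k^2-1)*c"
  have "0 < k/(k+1)"
    using k by simp
  then have "0 < c"
    using c by linarith
  have "(k^2-1)*c \<le> (k^2-1)*1"
    using c k by (intro mult_left_mono) (auto simp: one_le_power)
  then have "0 < D"
    using k unfolding D_def by simp
  have L: "(k+1)*c - k \<ge> 0"
    using c k by (simp add: field_simps)
  have "G_line_factor m (2*k^2) z (-c/k) * (k^2*D)
      = D*(((m+1)*k^2-1)*c^2 + 2*c*k - k^2) - m*k^4*(2*z*D)"
    using k unfolding G_line_factor_def by (simp add: field_simps power2_eq_square power4_eq_xxxx)
  also have "\<dots> = m*k^2*c*((k+1)*c-k)*(k-(k-1)*c) + D*((k+1)*c-k)*((k-1)*c+k)"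
    unfolding z[folded D_def] by (simp add: D_def algebra_simps power2_eq_square power4_eq_xxxx)
  finally have eq: "G_line_factor m (2*k^2) z (-c/k) * (k^2*D)
      = m*k^2*c*((k+1)*c-k)*(k-(k-1)*c) + D*((k+1)*c-k)*((k-1)*c+k)" .
  have "(k-1)*c \<le> (k-1)*1"
    using c k by (intro mult_left_mono) auto
  then have "0 \<le> m*k^2*c*((k+1)*c-k)*(k-(k-1)*c)"
    using m \<open>0 < c\<close> L by simp
  moreover have "0 \<le> D*((k+1)*c-k)*((k-1)*c+k)"
    using \<open>0 < D\<close> L k \<open>0 < c\<close> by simp
  ultimately have "0 \<le> G_line_factor m (2*k^2) z (-c/k) * (k^2*D)"
    unfolding eq by linarith
  moreover have "0 < k^2*D"
    using \<open>0 < D\<close> k by simp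
  ultimately show ?thesis
    by (meson mult_neg_pos not_le)
qed

lemma G_line_factor_pos:
  fixes m k b V :: real
  assumes "1 \<le> m" "1 \<le> k" "\<gamma> = 2*k^2" "V < b" "b < 0" "0 \<le> G_line_factor m \<gamma> z b"
  shows "0 < G_line_factor m \<gamma> z V"
proof -
  define A where "A = (m+1)*k^2 - 1"
  have "1*1 \<le> (m+1)*k^2"
    using assms(1,2) by (intro mult_mono) (auto simp: one_le_power)
  then have "0 \<le> A"
    unfolding A_def by simp
  moreover have "V + b \<le> 0"
    using assms(4,5) by linarith
  ultimately have "A*(V + b) - 2 < 0"
    using mult_nonneg_nonpos[of A "V + b"] by linarith
  then have "0 < (V - b)*(A*(V + b) - 2)"
    using assms(4) by (intro mult_neg_neg) auto
  also have "\<dots> = G_line_factor m \<gamma> z V - G_line_factor m \<gamma> z b"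
    unfolding G_line_factor_def A_def assms(3) by (simp add: field_simps power2_eq_square)
  finally show ?thesis
    using assms(6) by linarith
qed

lemma flow_crosses_line_upward:
  fixes \<gamma> z k c m V :: real
  assumes \<gamma>: "2 \<le> \<gamma>" "\<gamma> \<le> 3" and z: "0 < z" "z \<le> 1/8" and m: "1 \<le> m"
    and k: "1 \<le> k" "k \<le> 5/4" "\<gamma> = 2*k^2"
    and c: "k/(k+1) \<le> c" "c < 1" "2*z*(k^2 - (k^2-1)*c) = c*(1-c)"
    and V: "V1 \<gamma> \<le> V" "V < -c/k"
  shows "0 < Ff m V (-k*V) \<gamma> z / Gf m V (-k*V) \<gamma> z + k"
proof -
  have "0 < k/(k+1)"
    using k by simp
  then have "0 < c"
    using c by linarith
  then have "-c/k < 0"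
    using k by simp
  then have "V < 0"
    using V by linarith
  have "-1 < V1 \<gamma>"
    using \<gamma> unfolding V1_def by (simp add: field_simps)
  then have "0 < 1 + V" "1 + V \<noteq> 0"
    using V by linarith+
  have "0 < G_line_factor m \<gamma> z V"
    using G_line_factor_pos[OF m k(1,3) V(2) \<open>-c/k < 0\<close>]
      G_line_factor_endpoint_nonneg[OF k(1) c(1,2) _ c(3), of m, folded k(3)] m by simp
  then have G: "Gf m V (-k*V) \<gamma> z < 0"
    unfolding G_on_line[OF k(3)] using \<open>V < 0\<close> by (simp add: mult_neg_pos)
  have F_quadratic: "F_line_factor \<gamma> z x
      = (2*\<gamma>-1)*x^2 + (3*\<gamma>-2-z*\<gamma>*(\<gamma>-2))*x + ((\<gamma>-1) + z*\<gamma>*(3-\<gamma>))" for x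
    unfolding F_line_factor_def by simp
  have "F_line_factor \<gamma> z V < 0"
    using convex_quadratic_neg_between[where A="2*\<gamma>-1" and a="V1 \<gamma>" and b="-c/k" and x=V]
      F_line_factor_V1_neg[OF \<gamma> z] F_line_factor_endpoint_nonpos[OF k(1,2) c, folded k(3)] V \<gamma>
    unfolding F_quadratic by simp
  then have "Ff m V (-k*V) \<gamma> z + k * Gf m V (-k*V) \<gamma> z < 0"
    unfolding F_on_line[OF k(3) \<open>1 + V \<noteq> 0\<close>]
    using \<open>0 < 1 + V\<close> \<open>V < 0\<close> k m by (simp add: divide_neg_pos mult_pos_neg)
  then show ?thesis
    using G by (simp add: field_simps divide_neg_neg)
qed

lemma C1_vs_line:
  assumes "2 \<le> \<gamma>"
  shows "- sqrt (\<gamma>/2) * V1 \<gamma> \<le> C1 \<gamma>" "C1 \<gamma> = - sqrt (\<gamma>/2) * V1 \<gamma> \<longleftrightarrow> \<gamma> = 2"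
proof -
  have "- sqrt (\<gamma>/2) * V1 \<gamma> = sqrt (\<gamma>/2 * 4) / (\<gamma>+1)"
    unfolding V1_def real_sqrt_mult by simp
  then have line: "- sqrt (\<gamma>/2) * V1 \<gamma> = sqrt (2*\<gamma>) / (\<gamma>+1)"
    by simp
  have "2*\<gamma> \<le> 2*\<gamma>*(\<gamma>-1)"
    using assms by simp
  then show "- sqrt (\<gamma>/2) * V1 \<gamma> \<le> C1 \<gamma>"
    unfolding line C1_def using assms by (intro divide_right_mono) auto
  have "C1 \<gamma> = - sqrt (\<gamma>/2) * V1 \<gamma> \<longleftrightarrow> 2*\<gamma>*(\<gamma>-1) = 2*\<gamma>"
    unfolding line C1_def using assms by (simp add: divide_cancel_right)
  also have "\<dots> \<longleftrightarrow> \<gamma> = 2"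
    using assms by auto
  finally show "C1 \<gamma> = - sqrt (\<gamma>/2) * V1 \<gamma> \<longleftrightarrow> \<gamma> = 2" .
qed

lemma sqrt_half_bounds:
  assumes "2 \<le> \<gamma>" "\<gamma> \<le> 3"
  shows "1 \<le> sqrt (\<gamma>/2)" "sqrt (\<gamma>/2) \<le> 5/4" "\<gamma> = 2*(sqrt (\<gamma>/2))^2" "sqrt (2/\<gamma>) = 1 / sqrt (\<gamma>/2)"
proof -
  show "1 \<le> sqrt (\<gamma>/2)" "sqrt (2/\<gamma>) = 1 / sqrt (\<gamma>/2)"
    using assms by (simp_all add: real_sqrt_divide)
  show "\<gamma> = 2*(sqrt (\<gamma>/2))^2"
    using assms by simp
  have "sqrt (\<gamma>/2) \<le> sqrt ((5/4)^2)"
    using assms by (intro real_sqrt_le_mono) (simp add: power2_eq_square)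
  then show "sqrt (\<gamma>/2) \<le> 5/4"
    by simp
qed

lemma first_zero_after:
  fixes H :: "real \<Rightarrow> real"
  assumes cont: "continuous_on {p..t} H" and "p \<le> t" "0 < H p" "H t \<le> 0"
  obtains t0 where "p < t0" "t0 \<le> t" "H t0 = 0" "\<And>s. p \<le> s \<Longrightarrow> s < t0 \<Longrightarrow> 0 < H s"
proof -
  define T where "T = {s \<in> {p..t}. H s \<le> 0}"
  define t0 where "t0 = Inf T"
  have "closed T"
    unfolding T_def by (rule continuous_on_closed_Collect_le[OF cont continuous_on_const closed_atLeastAtMost])
  moreover have "t \<in> T" and bdd: "bdd_below T"
    using assms(2,4) unfolding T_def by (auto intro!: bdd_belowI[of _ p])
  ultimately have "t0 \<in> T"
    unfolding t0_def using closed_contains_Inf by blast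
  then have t0: "p \<le> t0" "t0 \<le> t" "H t0 \<le> 0"
    unfolding T_def by auto
  have below: "0 < H s" if "p \<le> s" "s < t0" for s
    using cInf_lower[OF _ bdd, of s] that t0 unfolding T_def t0_def by force
  have "p < t0"
    using t0 assms(3) by (cases "p = t0") auto
  moreover have "H t0 = 0"
  proof -
    obtain x where "p \<le> x" "x \<le> t0" "H x = 0"
      using IVT2'[of H t0 0 p] t0 assms(3) continuous_on_subset[OF cont] by fastforce
    then show ?thesis
      using below[of x] by (cases "x = t0") auto
  qed
  ultimately show ?thesis
    using that below t0 by auto
qed

lemma pos_right_of_start:
  fixes H :: "real \<Rightarrow> real"
  assumes deriv: "(H has_real_derivative D) (at a within {a..<b})"
    and "0 \<le> H a" and "H a = 0 \<Longrightarrow> 0 < D"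
  obtains d where "0 < d" "\<And>s. a < s \<Longrightarrow> s < a + d \<Longrightarrow> s < b \<Longrightarrow> 0 < H s"
proof (cases "H a = 0")
  case True
  then obtain d where d: "0 < d" "\<And>h. 0 < h \<Longrightarrow> a + h \<in> {a..<b} \<Longrightarrow> h < d \<Longrightarrow> H a < H (a + h)"
    using has_real_derivative_pos_inc_right[OF deriv] assms(3) by blast
  show ?thesis
  proof (rule that[OF d(1)])
    fix s assume "a < s" "s < a + d" "s < b"
    then show "0 < H s"
      using d(2)[of "s - a"] True by simp
  qed
next
  case False
  have "(H \<longlongrightarrow> H a) (at a within {a..<b})"
    using DERIV_continuous[OF deriv] by (simp add: continuous_within)
  then have "\<forall>\<^sub>F s in at a within {a..<b}. 0 < H s"
    using assms(2) False by (intro order_tendstoD(1)) auto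
  then obtain d where "0 < d" "\<And>s. s \<in> {a..<b} \<Longrightarrow> s \<noteq> a \<Longrightarrow> dist s a < d \<Longrightarrow> 0 < H s"
    unfolding eventually_at by blast
  then show ?thesis
    using that[of d] by (simp add: dist_real_def)
qed

lemma pos_if_deriv_pos_at_zeros:
  fixes H H' :: "real \<Rightarrow> real"
  assumes deriv: "\<And>s. s \<in> {a..<b} \<Longrightarrow> (H has_real_derivative H' s) (at s within {a..<b})"
    and start: "0 \<le> H a"
    and crossing: "\<And>s. s \<in> {a..<b} \<Longrightarrow> H s = 0 \<Longrightarrow> 0 < H' s"
    and t: "t \<in> {a<..<b}"
  shows "0 < H t"
proof (rule ccontr)
  assume "\<not> 0 < H t"
  have cont: "continuous_on {a..<b} H"
    using deriv by (meson DERIV_continuous continuous_on_eq_continuous_within)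
  have a_in: "a \<in> {a..<b}"
    using t by auto
  obtain d where "0 < d" and right_of_a: "\<And>s. a < s \<Longrightarrow> s < a + d \<Longrightarrow> s < b \<Longrightarrow> 0 < H s"
    using pos_right_of_start[OF deriv[OF a_in] start crossing[OF a_in]] by auto
  define p where "p = a + min d (t - a) / 2"
  have p: "a < p" "p < t"
    using \<open>0 < d\<close> t unfolding p_def by (auto simp: min_def field_simps)
  moreover have "p < a + d"
    using \<open>0 < d\<close> unfolding p_def by (auto simp: min_def)
  ultimately have "0 < H p"
    using right_of_a t by auto
  obtain t0 where t0: "p < t0" "t0 \<le> t" "H t0 = 0" and pos: "\<And>s. p \<le> s \<Longrightarrow> s < t0 \<Longrightarrow> 0 < H s"
  proof (rule first_zero_after)
    show "continuous_on {p..t} H"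
      using p t by (auto intro: continuous_on_subset[OF cont])
  qed (use p \<open>0 < H p\<close> \<open>\<not> 0 < H t\<close> in auto)
  have t0_in: "t0 \<in> {a..<b}"
    using t0 p t by auto
  obtain e where "0 < e" and left_of_t0: "\<And>h. 0 < h \<Longrightarrow> t0 - h \<in> {a..<b} \<Longrightarrow> h < e \<Longrightarrow> H (t0 - h) < 0"
    using has_real_derivative_pos_inc_left[OF deriv[OF t0_in] crossing[OF t0_in t0(3)]] t0(3) by auto
  define h where "h = min e (t0 - p) / 2"
  have "0 < h" "h < e" "p \<le> t0 - h"
    using \<open>0 < e\<close> t0 unfolding h_def by (auto simp: min_def field_simps)
  then show False
    using left_of_t0[of h] pos[of "t0 - h"] p t0_in by force
qed

theorem mainTheorem10:
  fixes m :: nat and \<gamma> z :: real and C :: "real \<Rightarrow> real"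
  assumes "m \<in> {1, 2}" and "2 \<le> \<gamma>" and "\<gamma> \<le> 3" and "0 < z" and "z \<le> zM \<gamma>"
    and "is_sol (real m) \<gamma> z C (V1 \<gamma>) (- sqrt (2 / \<gamma>) * C8 \<gamma> z) (C1 \<gamma>)"
  shows "(\<forall>V \<in> {V1 \<gamma> <..< - sqrt (2 / \<gamma>) * C8 \<gamma> z}. C V > - sqrt (\<gamma> / 2) * V)
       \<and> C1 \<gamma> \<ge> - sqrt (\<gamma> / 2) * V1 \<gamma>
       \<and> (C1 \<gamma> = - sqrt (\<gamma> / 2) * V1 \<gamma> \<longleftrightarrow> \<gamma> = 2)"
proof -
  define k where "k = sqrt (\<gamma>/2)"
  have k: "1 \<le> k" "k \<le> 5/4" "\<gamma> = 2*k^2" and endpoint: "- sqrt (2/\<gamma>) * C8 \<gamma> z = - C8 \<gamma> z / k"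
    using sqrt_half_bounds[OF assms(2,3)] unfolding k_def by auto
  note z = z_bounds_of_le_zM[OF k(1,3) assms(4,5)]
  note C8 = C8_bounds[OF k(1) assms(4) z(1) k(3)]
  have above_line: "0 < C V + k*V" if "V \<in> {V1 \<gamma> <..< - C8 \<gamma> z / k}" for V
  proof (rule pos_if_deriv_pos_at_zeros[OF _ _ _ that])
    show "((\<lambda>V. C V + k*V) has_real_derivative Ff m V (C V) \<gamma> z / Gf m V (C V) \<gamma> z + k)
        (at V within {V1 \<gamma>..<- C8 \<gamma> z / k})" if "V \<in> {V1 \<gamma>..<- C8 \<gamma> z / k}" for V
      using assms(6) that unfolding is_sol_def endpoint by (auto intro!: derivative_eq_intros)
    show "0 \<le> C (V1 \<gamma>) + k * V1 \<gamma>"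
      using assms(6) C1_vs_line(1)[OF assms(2)] unfolding is_sol_def k_def by simp
    show "0 < Ff m V (C V) \<gamma> z / Gf m V (C V) \<gamma> z + k"
      if "V \<in> {V1 \<gamma>..<- C8 \<gamma> z / k}" "C V + k*V = 0" for V
    proof -
      have "C V = -k*V" "1 \<le> real m"
        using that(2) assms(1) by auto
      then show ?thesis
        using flow_crosses_line_upward[OF assms(2,3) assms(4) z(2) _ k C8] that(1) by auto
    qed
  qed
  have "\<forall>V \<in> {V1 \<gamma> <..< - C8 \<gamma> z / k}. - k * V < C V"
    using above_line by fastforce
  then show ?thesis
    using C1_vs_line[OF assms(2)] unfolding endpoint k_def[symmetric] by auto
qed

end
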